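(* Fix $L\in\mathbb Z$ and work on $Y_L=\mathbb R\times(0,2^L]\times\mathbb R$ with the objects described in the context. The quadruple $(Y_L,\mu,\nu,\mathcal C)$, where $\mathcal C(A)=\mathcal M(\mathcal N(\mathcal Q(A)))$ and $\mathcal E=\mathcal D_L$, satisfies the crop condition for every choice of parameters $\Phi\ge2$, $K\ge1$.
   Context: Dyadic intervals $I(m,l)=(2^lm,2^l(m+1)]$; tiles $H(m,l,n)=I(m,l)\times(2^{l-1},2^l]\times I(n,-l)$. $\mathcal D_L$ = strips $D(m,l)=I(m,l)\times(0,2^l]\times\mathbb R$ with $l\le L$, $\sigma(D(m,l))=2^l$. $\mathcal T_L$ = trees $T(m,l,n)=\bigcup_{l'\le l}\bigcup_{m':\,I(m',l')\subseteq I(m,l)}H(m',l',N(n,l'))$ with $l\le L$ ($N(n,l')$ the integer with $I(n,-l)\subseteq I(N(n,l'),-l')$), $\tau(T(m,l,n))=2^l$. Outer measures on $Y_L$: $\mu(A)=\inf\{\sum_{S\in\mathcal S'}\sigma(S):\mathcal S'\subseteq\mathcal D_L,A\subseteq\bigcup\mathcal S'\}$, $\nu$ likewise from $(\mathcal T_L,\tau)$. $\pi$ = projection onto first coordinate, $|\cdot|$ Lebesgue measure. For $E\in\mathcal D_L$, $E_+=\{(x,s,\xi)\in E:s>\sigma(E)/2\}$. $\mathcal Q(A)=\{E\in\mathcal D_L:E_+\cap A\ne\varnothing\}$. For $\mathcal D_1\subseteq\mathcal D_L$: $\mathcal N(\mathcal D_1)=\{E\in\mathcal D_L:|\pi(E)\cap\pi(\bigcup\mathcal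 D_1)|\ge|\pi(E)|/2\}$; $\mathcal M(\mathcal D_1)$ = elements of $\mathcal D_1$ maximal under inclusion. $\mathbf B_{\mathcal C}(A)=\bigcup_{E\in\mathcal C(A)}E$. A $\mu$-covering function with parameter $\Phi$: a map $\mathcal C$ assigning to each $A$ a subcollection of pairwise disjoint elements of $\mathcal E$ with $A\subseteq\mathbf B_{\mathcal C}(A)$, $\mu(\mathbf B_{\mathcal C}(A))\le\Phi\mu(A)$, $\mathbf B_{\mathcal C}$ monotone. A collection $\mathcal A$ of pairwise disjoint sets is $\nu$-Carathéodory (parameter $K$) if $\sum_{A\in\mathcal A}\nu(U\cap A)\le K\nu(U\cap\bigcup\mathcal A)$ for all $U$. Crop condition (parameters $\Phi,K$): $\mathcal C$ is a $\mu$-covering function with parameter $\Phi$, and for every collection $\mathcal A\subseteq\mathcal E$ there exists a $\nu$-Carathéodory (parameter $K$) subcollection $\mathcal D'\subseteq\mathcal A$ such that for every $F$ disjoint from $\bigcup_{D\in\mathcal D'}D$, $\mathbf B_{\mathcal C}(F)=\bigcup_{E\in\mathcal C(F)\setminus\mathcal A}E$. *)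

theory Defs
  imports "HOL-Analysis.Analysis"
begin

type_synonym point = "real \<times> real \<times> real"

definition dyad :: "int \<Rightarrow> int \<Rightarrow> real set" where
  "dyad m l = {(2::real) powi l * of_int m <.. (2::real) powi l * (of_int m + 1)}"

definition YL :: "int \<Rightarrow> point set" where
  "YL L = UNIV \<times> {0 <.. (2::real) powi L} \<times> UNIV"

definition tile :: "int \<Rightarrow> int \<Rightarrow> int \<Rightarrow> point set" where
  "tile m l n = dyad m l \<times> {(2::real) powi (l - 1) <.. (2::real) powi l} \<times> dyad n (- l)"

definition strip :: "int \<Rightarrow> int \<Rightarrow> point set" where
  "strip m l = dyad m l \<times> {0 <.. (2::real) powi l} \<times> UNIV"

definition strips :: "int \<Rightarrow> point set set" where
  "strips L = {strip m l | m l. l \<le> L}"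

definition sigma :: "point set \<Rightarrow> real" where
  "sigma E = (THE s. \<exists>m l. E = strip m l \<and> s = (2::real) powi l)"

definition Nidx :: "int \<Rightarrow> int \<Rightarrow> int \<Rightarrow> int" where
  "Nidx n l l' = (THE k. dyad n (- l) \<subseteq> dyad k (- l'))"

definition tree :: "int \<Rightarrow> int \<Rightarrow> int \<Rightarrow> point set" where
  "tree m l n = (\<Union>l'\<in>{..l}. \<Union>m'\<in>{m'. dyad m' l' \<subseteq> dyad m l}. tile m' l' (Nidx n l l'))"

definition trees :: "int \<Rightarrow> point set set" where
  "trees L = {tree m l n | m l n. l \<le> L}"

definition tau :: "point set \<Rightarrow> real" where
  "tau T = (THE t. \<exists>m l n. T = tree m l n \<and> t = (2::real) powi l)"

definition outer :: "point set set \<Rightarrow> (point set \<Rightarrow> real) \<Rightarrow> point set \<Rightarrow> ennreal" where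
  "outer \<S> w A = (INF \<S>' \<in> {\<S>'. \<S>' \<subseteq> \<S> \<and> A \<subseteq> \<Union>\<S>'}. (\<Sum>\<^sub>\<infinity>S\<in>\<S>'. ennreal (w S)))"

definition mu :: "int \<Rightarrow> point set \<Rightarrow> ennreal" where
  "mu L = outer (strips L) sigma"

definition nu :: "int \<Rightarrow> point set \<Rightarrow> ennreal" where
  "nu L = outer (trees L) tau"

definition upper :: "point set \<Rightarrow> point set" where
  "upper E = {p \<in> E. fst (snd p) > sigma E / 2}"

definition Qc :: "int \<Rightarrow> point set \<Rightarrow> point set set" where
  "Qc L A = {E \<in> strips L. upper E \<inter> A \<noteq> {}}"

definition Nc :: "int \<Rightarrow> point set set \<Rightarrow> point set set" where
  "Nc L \<D>1 = {E \<in> strips L.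
      emeasure lborel (fst ` E \<inter> fst ` (\<Union>\<D>1)) \<ge> emeasure lborel (fst ` E) / 2}"

definition Mc :: "point set set \<Rightarrow> point set set" where
  "Mc \<D>1 = {E \<in> \<D>1. \<forall>E'\<in>\<D>1. E \<subseteq> E' \<longrightarrow> E' = E}"

definition Cc :: "int \<Rightarrow> point set \<Rightarrow> point set set" where
  "Cc L A = Mc (Nc L (Qc L A))"

definition covering_function ::
  "point set \<Rightarrow> point set set \<Rightarrow> (point set \<Rightarrow> ennreal) \<Rightarrow> (point set \<Rightarrow> point set set) \<Rightarrow> real \<Rightarrow> bool" where
  "covering_function Y \<E> \<mu> C \<Phi> \<longleftrightarrow>
     (\<forall>A. A \<subseteq> Y \<longrightarrow> C A \<subseteq> \<E> \<and> disjoint (C A) \<and> A \<subseteq> \<Union>(C A)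
                 \<and> \<mu> (\<Union>(C A)) \<le> ennreal \<Phi> * \<mu> A)
   \<and> (\<forall>A A'. A \<subseteq> A' \<and> A' \<subseteq> Y \<longrightarrow> \<Union>(C A) \<subseteq> \<Union>(C A'))"

definition caratheodory :: "(point set \<Rightarrow> ennreal) \<Rightarrow> real \<Rightarrow> point set set \<Rightarrow> bool" where
  "caratheodory \<nu> K \<A> \<longleftrightarrow> disjoint \<A> \<and>
     (\<forall>U. (\<Sum>\<^sub>\<infinity>A\<in>\<A>. \<nu> (U \<inter> A)) \<le> ennreal K * \<nu> (U \<inter> \<Union>\<A>))"

definition crop_condition ::
  "point set \<Rightarrow> point set set \<Rightarrow> (point set \<Rightarrow> ennreal) \<Rightarrow> (point set \<Rightarrow> ennreal)
     \<Rightarrow> (point set \<Rightarrow> point set set) \<Rightarrow> real \<Rightarrow> real \<Rightarrow> bool" where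
  "crop_condition Y \<E> \<mu> \<nu> C \<Phi> K \<longleftrightarrow>
     covering_function Y \<E> \<mu> C \<Phi> \<and>
     (\<forall>\<A>. \<A> \<subseteq> \<E> \<longrightarrow> (\<exists>\<D>'. \<D>' \<subseteq> \<A> \<and> caratheodory \<nu> K \<D>' \<and>
        (\<forall>F. F \<subseteq> Y \<and> F \<inter> \<Union>\<D>' = {} \<longrightarrow> \<Union>(C F) = \<Union>(C F - \<A>))))"

end

theory Submission
  imports Defs
begin

(* Covering: every point of Y_L lies in the upper half E_+ of some strip E, and a strip
   containing a point of E_+ contains E.  Hence the strips of Q(A) cover A, and every strip
   cover of A also covers their union, whose shadow P on the first axis therefore has
   measure |P| <= mu(A).  Each strip of C(A) has at least half of its shadow inside P and
   these shadows are disjoint, so mu of the union of C(A) is at most 2|P| <= 2 mu(A).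

   Cropping: take for D' the maximal strips of the given collection A.  If F misses the
   union of D' and E lies in C(F) and in A, then E misses F, but the shadow of E meets that
   of some G in Q(F); as strips are nested or disjoint, maximality of E forces G to lie in E,
   although G_+ meets F.

   Caratheodory property, already with K = 1: a tree T meeting a strip A of lower level
   meets it only inside the subtree of T over the interval of A, and otherwise the strip of
   T lies in A.  Either way T cap A lies in one tree of size |pi(T) cap pi(A)|, so for a tree
   cover of U cap (union of D) the sum over A in D of nu(U cap A) is at most the double sum
   of |pi(T) cap pi(A)|; exchanging the sums and using that the shadows of the A are
   disjoint bounds it by the sum of |pi(T)| = tau(T). *)

section \<open>Sums of extended nonnegative reals\<close>

(* The library fact summable_on_ennreal is, despite its name, about ennreal_of_enat. *)
lemma ennreal_summable_on [simp]: "(f :: 'a \<Rightarrow> ennreal) summable_on A"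
  by (simp add: nonneg_summable_on_complete)

lemma infsum_image_le_ennreal:
  fixes g :: "'b \<Rightarrow> ennreal"
  shows "infsum g (f ` I) \<le> (\<Sum>\<^sub>\<infinity>i\<in>I. g (f i))"
proof -
  define J where "J = inv_into I f ` f ` I"
  have "J \<subseteq> I" by (auto simp: J_def inv_into_into)
  have "inj_on f J" by (rule inj_onI) (auto simp: J_def f_inv_into_f)
  have "f ` J = f ` I" by (force simp: J_def f_inv_into_f image_image)
  then have "infsum g (f ` I) = (\<Sum>\<^sub>\<infinity>i\<in>J. g (f i))"
    using infsum_reindex[OF \<open>inj_on f J\<close>, of g] by (simp add: comp_def)
  also have "\<dots> \<le> (\<Sum>\<^sub>\<infinity>i\<in>I. g (f i))"
    using \<open>J \<subseteq> I\<close> by (intro infsum_mono_neutral) auto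
  finally show ?thesis .
qed

lemma emeasure_Union_le_infsum:
  assumes "countable \<C>" "\<C> \<subseteq> sets M"
  shows "emeasure M (\<Union>\<C>) \<le> infsum (emeasure M) \<C>"
proof (cases "finite \<C>")
  case True
  then show ?thesis using assms emeasure_subadditive_finite[of \<C> id M] by simp
next
  case False
  then obtain g where g: "bij_betw g (UNIV :: nat set) \<C>"
    using countable_infiniteE'[OF assms(1)] by blast
  then have "emeasure M (\<Union>\<C>) = emeasure M (\<Union>i. g i)" by (simp add: bij_betw_def)
  also have "\<dots> \<le> (\<Sum>i. emeasure M (g i))"
    using g assms(2) by (intro emeasure_subadditive_countably) (auto simp: bij_betw_def)
  also have "\<dots> = (\<Sum>\<^sub>\<infinity>i\<in>UNIV. emeasure M (g i))"
    by (rule sums_unique[symmetric], intro has_sum_imp_sums has_sum_infsum) simp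
  also have "\<dots> = infsum (emeasure M) \<C>"
    using infsum_reindex_bij_betw[OF g, of "emeasure M"] by simp
  finally show ?thesis .
qed

lemma infsum_emeasure_disjoint_le:
  assumes "disjoint_family_on f I" "\<And>i. i \<in> I \<Longrightarrow> f i \<in> sets M"
    and "\<And>i. i \<in> I \<Longrightarrow> f i \<subseteq> B" "B \<in> sets M"
  shows "(\<Sum>\<^sub>\<infinity>i\<in>I. emeasure M (f i)) \<le> emeasure M B"
proof (rule infsum_le_finite_sums)
  fix F assume F: "finite F" "F \<subseteq> I"
  have "(\<Sum>i\<in>F. emeasure M (f i)) = emeasure M (\<Union>i\<in>F. f i)"
    using F assms(2) disjoint_family_on_mono[OF F(2) assms(1)] by (intro sum_emeasure) auto
  also have "\<dots> \<le> emeasure M B" using F assms(3,4) by (intro emeasure_mono) auto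
  finally show "(\<Sum>i\<in>F. emeasure M (f i)) \<le> emeasure M B" .
qed simp

lemma sum_le_infsum_ennreal:
  fixes f :: "'a \<Rightarrow> ennreal"
  assumes "finite F" "F \<subseteq> A"
  shows "sum f F \<le> infsum f A"
proof -
  have "sum f F = infsum f F" using assms(1) by simp
  also have "\<dots> \<le> infsum f A" using assms(2) by (intro infsum_mono_neutral) auto
  finally show ?thesis .
qed

lemma infsum_cmult_right_le_ennreal:
  fixes f :: "'a \<Rightarrow> ennreal"
  shows "(\<Sum>\<^sub>\<infinity>x\<in>A. c * f x) \<le> c * infsum f A"
proof (rule infsum_le_finite_sums)
  fix F assume "finite F" "F \<subseteq> A"
  then show "(\<Sum>x\<in>F. c * f x) \<le> c * infsum f A"
    by (simp add: mult_left_mono sum_le_infsum_ennreal flip: sum_distrib_left)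
qed simp

lemma sum_infsum_ennreal:
  fixes f :: "'a \<Rightarrow> 'b \<Rightarrow> ennreal"
  assumes "finite F"
  shows "(\<Sum>x\<in>F. \<Sum>\<^sub>\<infinity>y\<in>B. f x y) = (\<Sum>\<^sub>\<infinity>y\<in>B. \<Sum>x\<in>F. f x y)"
  using assms by induction (simp_all add: infsum_add)

lemma infsum_swap_le_ennreal:
  fixes f :: "'a \<Rightarrow> 'b \<Rightarrow> ennreal"
  shows "(\<Sum>\<^sub>\<infinity>x\<in>A. \<Sum>\<^sub>\<infinity>y\<in>B. f x y) \<le> (\<Sum>\<^sub>\<infinity>y\<in>B. \<Sum>\<^sub>\<infinity>x\<in>A. f x y)"
proof (rule infsum_le_finite_sums)
  fix F assume "finite F" "F \<subseteq> A"
  then have "(\<Sum>x\<in>F. \<Sum>\<^sub>\<infinity>y\<in>B. f x y) = (\<Sum>\<^sub>\<infinity>y\<in>B. \<Sum>x\<in>F. f x y)"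
    by (simp add: sum_infsum_ennreal)
  also have "\<dots> \<le> (\<Sum>\<^sub>\<infinity>y\<in>B. \<Sum>\<^sub>\<infinity>x\<in>A. f x y)"
    using \<open>finite F\<close> \<open>F \<subseteq> A\<close> by (intro infsum_mono sum_le_infsum_ennreal) simp_all
  finally show "(\<Sum>x\<in>F. \<Sum>\<^sub>\<infinity>y\<in>B. f x y) \<le> (\<Sum>\<^sub>\<infinity>y\<in>B. \<Sum>\<^sub>\<infinity>x\<in>A. f x y)" .
qed simp

section \<open>Dyadic intervals\<close>

lemma powi_two_less_iff [simp]: "(2::real) powi l < 2 powi l' \<longleftrightarrow> l < l'"
  by (metis linorder_not_le not_less_iff_gr_or_eq power_int_strict_increasing one_less_numeral_iff semiring_norm(76))

lemma powi_two_le_iff [simp]: "(2::real) powi l \<le> 2 powi l' \<longleftrightarrow> l \<le> l'"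
  by (meson linorder_not_le powi_two_less_iff)

lemma powi_two_diff_one: "(2::real) powi (l - 1) = 2 powi l / 2"
  by (simp add: power_int_diff)

lemma ceiling_divide_real_eq_div:
  assumes "0 \<le> b"
  shows "\<lceil>a / real_of_int b\<rceil> = - (- \<lceil>a\<rceil> div b)"
  using floor_divide_real_eq_div[OF assms, of "- a"] by (simp add: ceiling_def)

lemma mem_dyad_iff: "x \<in> dyad m l \<longleftrightarrow> 2 powi l * of_int m < x \<and> x \<le> 2 powi l * (of_int m + 1)"
  by (simp add: dyad_def)

lemma mem_dyad_iff_ceiling: "x \<in> dyad m l \<longleftrightarrow> m = \<lceil>x / 2 powi l\<rceil> - 1"
proof -
  have "x \<in> dyad m l \<longleftrightarrow> of_int m < x / 2 powi l \<and> x / 2 powi l \<le> of_int m + 1"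
    unfolding mem_dyad_iff by (simp add: field_simps)
  also have "\<dots> \<longleftrightarrow> \<lceil>x / 2 powi l\<rceil> = m + 1" by (simp add: ceiling_eq_iff)
  finally show ?thesis by linarith
qed

lemma dyad_index_unique: "x \<in> dyad m l \<Longrightarrow> x \<in> dyad m' l \<Longrightarrow> m = m'"
  by (simp add: mem_dyad_iff_ceiling)

lemma right_endpoint_in_dyad: "2 powi l * (of_int m + 1) \<in> dyad m l"
  by (simp add: mem_dyad_iff)

lemma dyad_nested:
  assumes "l \<le> l'" "x \<in> dyad m l" "x \<in> dyad m' l'"
  shows "dyad m l \<subseteq> dyad m' l'"
proof
  \<comment> \<open>the level-\<open>l'\<close> index of a point depends only on its level-\<open>l\<close> index\<close>
  have "(2::real) powi l' = 2 powi l * 2 powi (l' - l)" by (simp flip: power_int_add)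
  also have "\<dots> = 2 powi l * real_of_int (2 ^ nat (l' - l))"
    using assms(1) by (simp add: power_int_nonneg_exp)
  finally have "z / 2 powi l' = z / 2 powi l / real_of_int (2 ^ nat (l' - l))" for z :: real
    by (simp del: of_int_power)
  then have parent: "\<lceil>z / 2 powi l'\<rceil> = - (- \<lceil>z / 2 powi l\<rceil> div 2 ^ nat (l' - l))" for z :: real
    by (simp only: ceiling_divide_real_eq_div zero_le_power zero_le_numeral)
  fix y assume "y \<in> dyad m l"
  then show "y \<in> dyad m' l'"
    using assms(2,3) by (simp add: mem_dyad_iff_ceiling parent)
qed

lemma emeasure_dyad: "emeasure lborel (dyad m l) = ennreal (2 powi l)"
  unfolding dyad_def by (subst emeasure_lborel_Ioc) (auto simp: algebra_simps)

lemma dyad_sets [measurable]: "dyad m l \<in> sets lborel"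
  unfolding dyad_def by simp

lemma dyad_eq_imp_level_eq:
  assumes "dyad m l = dyad m' l'" shows "l = l'"
proof -
  have "ennreal (2 powi l) = ennreal (2 powi l')" by (metis assms emeasure_dyad)
  then have "(2::real) powi l = 2 powi l'" by simp
  then show ?thesis by (metis order_antisym order_refl powi_two_le_iff)
qed

section \<open>Strips\<close>

lemma mem_strip_iff: "(x, s, y) \<in> strip m l \<longleftrightarrow> x \<in> dyad m l \<and> 0 < s \<and> s \<le> 2 powi l"
  by (simp add: strip_def)

lemma fst_strip [simp]: "fst ` strip m l = dyad m l"
  by (simp add: strip_def)

lemma strip_subset_iff: "strip m l \<subseteq> strip m' l' \<longleftrightarrow> l \<le> l' \<and> dyad m l \<subseteq> dyad m' l'"
proof -
  have "{0<..(2::real) powi l} \<subseteq> {0<..2 powi l'} \<longleftrightarrow> l \<le> l'"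
    by (metis greaterThanAtMost_iff order_refl order_trans powi_two_le_iff subset_iff zero_less_power_int zero_less_numeral)
  then show ?thesis using right_endpoint_in_dyad[of l m] by (auto simp: strip_def times_subset_iff)
qed

lemma strip_Int_empty_iff: "strip m l \<inter> strip m' l' = {} \<longleftrightarrow> dyad m l \<inter> dyad m' l' = {}"
  by (auto simp: strip_def Times_Int_Times)

lemma strip_subset_of_mem:
  assumes "p \<in> strip m l" "p \<in> strip m' l'" "l \<le> l'"
  shows "strip m l \<subseteq> strip m' l'"
proof -
  have "fst p \<in> dyad m l" "fst p \<in> dyad m' l'" using assms(1,2) by (auto simp: strip_def)
  then show ?thesis using assms(3) dyad_nested strip_subset_iff by blast
qed

lemma strip_eq_imp_level_eq: "strip m l = strip m' l' \<Longrightarrow> l = l'"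
  by (metis dyad_eq_imp_level_eq fst_strip)

lemma mem_strips_iff: "E \<in> strips L \<longleftrightarrow> (\<exists>m l. E = strip m l \<and> l \<le> L)"
  by (auto simp: strips_def)

lemma stripsE:
  assumes "E \<in> strips L"
  obtains m l where "E = strip m l" "l \<le> L"
  using assms by (auto simp: mem_strips_iff)

lemma strip_in_strips_iff [simp]: "strip m l \<in> strips L \<longleftrightarrow> l \<le> L"
  by (auto simp: mem_strips_iff dest: strip_eq_imp_level_eq)

lemma sigma_strip [simp]: "sigma (strip m l) = 2 powi l"
  unfolding sigma_def by (rule the_equality) (auto dest: strip_eq_imp_level_eq)

lemma sigma_strips_pos: "E \<in> strips L \<Longrightarrow> 0 < sigma E"
  by (auto elim: stripsE)

lemma emeasure_fst_strips: "E \<in> strips L \<Longrightarrow> emeasure lborel (fst ` E) = sigma E"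
  by (auto elim: stripsE simp: emeasure_dyad)

lemma fst_strips_sets: "E \<in> strips L \<Longrightarrow> fst ` E \<in> sets lborel"
  by (metis stripsE fst_strip dyad_sets)

lemma countable_strips: "countable (strips L)"
proof -
  have "strips L \<subseteq> (\<lambda>(m, l). strip m l) ` UNIV" by (auto simp: strips_def)
  then show ?thesis by (rule countable_subset) simp
qed

lemma strips_nested_or_disjoint:
  assumes "E \<in> strips L" "E' \<in> strips L'" "E \<inter> E' \<noteq> {}"
  shows "E \<subseteq> E' \<or> E' \<subseteq> E"
  using assms strip_subset_of_mem by (elim stripsE) (metis disjoint_iff nle_le)

lemma strips_disjoint_iff_fst:
  assumes "E \<in> strips L" "E' \<in> strips L'"
  shows "E \<inter> E' = {} \<longleftrightarrow> fst ` E \<inter> fst ` E' = {}"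
  using assms by (metis stripsE fst_strip strip_Int_empty_iff)

lemma strips_subset_if_upper:
  assumes "E \<in> strips L" "E' \<in> strips L'" "p \<in> upper E" "p \<in> E'"
  shows "E \<subseteq> E'"
proof -
  obtain m l m' l' where E: "E = strip m l" and E': "E' = strip m' l'"
    using assms(1,2) by (metis stripsE)
  have "p \<in> E" "(2::real) powi (l - 1) < fst (snd p)"
    using assms(3) by (auto simp: upper_def E powi_two_diff_one)
  moreover have "fst (snd p) \<le> 2 powi l'"
    using assms(4) by (cases p) (simp add: E' mem_strip_iff)
  ultimately have "l - 1 < l'" by (metis order_less_le_trans powi_two_less_iff)
  then show ?thesis using strip_subset_of_mem \<open>p \<in> E\<close> assms(4) E E' by simp
qed

lemma ex_strip_upper:
  assumes "p \<in> YL L"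
  shows "\<exists>E\<in>strips L. p \<in> upper E"
proof -
  obtain x s y where p: "p = (x, s, y)" by (cases p)
  have s: "0 < s" "s \<le> 2 powi L" using assms by (auto simp: YL_def p)
  have powr: "(2::real) powi k = 2 powr real_of_int k" for k by (simp add: powr_real_of_int')
  define l where "l = \<lceil>log 2 s\<rceil>"
  have "log 2 s \<le> real_of_int L" using s by (simp add: log_le_iff powr)
  then have "l \<le> L" unfolding l_def by (simp add: ceiling_le_iff)
  have "log 2 s \<le> real_of_int l" unfolding l_def by simp
  then have "s \<le> 2 powi l" using s by (simp add: log_le_iff powr)
  have "real_of_int (l - 1) < log 2 s" unfolding l_def by linarith
  then have "2 powi l / 2 < s" using s by (simp add: less_log_iff powr powr_diff)
  define m where "m = \<lceil>x / 2 powi l\<rceil> - 1"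
  have "x \<in> dyad m l" by (simp add: m_def mem_dyad_iff_ceiling)
  then have "p \<in> upper (strip m l)"
    using s \<open>s \<le> 2 powi l\<close> \<open>2 powi l / 2 < s\<close> by (simp add: upper_def p mem_strip_iff)
  then show ?thesis using \<open>l \<le> L\<close> by auto
qed

section \<open>The covering function\<close>

lemma outer_le_infsum: "\<S>' \<subseteq> \<S> \<Longrightarrow> A \<subseteq> \<Union>\<S>' \<Longrightarrow> outer \<S> w A \<le> (\<Sum>\<^sub>\<infinity>S\<in>\<S>'. ennreal (w S))"
  unfolding outer_def by (rule INF_lower) simp

lemma outer_le_infsum_image:
  assumes "f ` I \<subseteq> \<S>" "A \<subseteq> \<Union>(f ` I)"
  shows "outer \<S> w A \<le> (\<Sum>\<^sub>\<infinity>i\<in>I. ennreal (w (f i)))"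
  using outer_le_infsum[OF assms] infsum_image_le_ennreal by (rule order_trans)

lemma finite_strips_supset:
  assumes "E \<in> strips L"
  shows "finite {E' \<in> strips L. E \<subseteq> E'}"
proof -
  obtain m l where E: "E = strip m l" using assms by (rule stripsE)
  define x where "x = (2::real) powi l * (of_int m + 1)"
  have "{E' \<in> strips L. E \<subseteq> E'} \<subseteq> (\<lambda>l'. strip (\<lceil>x / 2 powi l'\<rceil> - 1) l') ` {l..L}"
  proof
    fix E' assume "E' \<in> {E' \<in> strips L. E \<subseteq> E'}"
    then obtain m' l' where E': "E' = strip m' l'" "l' \<le> L" "strip m l \<subseteq> strip m' l'"
      by (auto simp: E elim: stripsE)
    then have "l \<le> l'" "x \<in> dyad m' l'"
      using right_endpoint_in_dyad[of l m] by (auto simp: x_def strip_subset_iff)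
    then show "E' \<in> (\<lambda>l'. strip (\<lceil>x / 2 powi l'\<rceil> - 1) l') ` {l..L}"
      using E' by (auto simp: mem_dyad_iff_ceiling)
  qed
  then show ?thesis by (rule finite_subset) simp
qed

lemma Mc_subset: "Mc \<D> \<subseteq> \<D>"
  by (auto simp: Mc_def)

lemma ex_Mc_supset:
  assumes "\<D> \<subseteq> strips L" "E \<in> \<D>"
  shows "\<exists>E'\<in>Mc \<D>. E \<subseteq> E'"
proof -
  have "{E' \<in> \<D>. E \<subseteq> E'} \<subseteq> {E' \<in> strips L. E \<subseteq> E'}" using assms(1) by blast
  moreover have "finite {E' \<in> strips L. E \<subseteq> E'}" using assms by (simp add: finite_strips_supset subsetD)
  ultimately have "finite {E' \<in> \<D>. E \<subseteq> E'}" by (rule finite_subset)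
  then obtain E' where "E' \<in> \<D>" "E \<subseteq> E'" "\<forall>E''\<in>{E' \<in> \<D>. E \<subseteq> E'}. E' \<subseteq> E'' \<longrightarrow> E' = E''"
    using finite_has_maximal2[of "{E' \<in> \<D>. E \<subseteq> E'}" E] assms(2) by blast
  then have "E' \<in> Mc \<D>" unfolding Mc_def by auto
  with \<open>E \<subseteq> E'\<close> show ?thesis by blast
qed

lemma Union_Mc:
  assumes "\<D> \<subseteq> strips L"
  shows "\<Union>(Mc \<D>) = \<Union>\<D>"
proof
  show "\<Union>(Mc \<D>) \<subseteq> \<Union>\<D>" by (rule Union_mono[OF Mc_subset])
  show "\<Union>\<D> \<subseteq> \<Union>(Mc \<D>)"
  proof
    fix p assume "p \<in> \<Union>\<D>"
    then obtain E where "E \<in> \<D>" "p \<in> E" by blast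
    with ex_Mc_supset[OF assms] obtain E' where "E' \<in> Mc \<D>" "E \<subseteq> E'" by blast
    with \<open>p \<in> E\<close> show "p \<in> \<Union>(Mc \<D>)" by blast
  qed
qed

lemma disjoint_Mc:
  assumes "\<D> \<subseteq> strips L"
  shows "disjoint (Mc \<D>)"
proof (rule pairwiseI)
  fix E E' assume E: "E \<in> Mc \<D>" "E' \<in> Mc \<D>" "E \<noteq> E'"
  then have "E \<in> strips L" "E' \<in> strips L" using assms Mc_subset by blast+
  show "disjnt E E'"
  proof (rule ccontr)
    assume "\<not> disjnt E E'"
    then have "E \<subseteq> E' \<or> E' \<subseteq> E"
      using strips_nested_or_disjoint[OF \<open>E \<in> strips L\<close> \<open>E' \<in> strips L\<close>] by (simp add: disjnt_def)
    with E show False unfolding Mc_def by blast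
  qed
qed

lemma fst_Union_strips_sets:
  assumes "\<D> \<subseteq> strips L"
  shows "fst ` \<Union>\<D> \<in> sets lborel"
proof -
  have "fst ` \<Union>\<D> = (\<Union>E\<in>\<D>. fst ` E)" by blast
  also have "\<dots> \<in> sets lborel"
    using countable_subset[OF assms countable_strips] fst_strips_sets assms
    by (intro sets.countable_UN'') blast+
  finally show ?thesis .
qed

lemma mem_Nc_iff:
  "E \<in> Nc L \<D> \<longleftrightarrow> E \<in> strips L \<and> ennreal (sigma E / 2) \<le> emeasure lborel (fst ` E \<inter> fst ` \<Union>\<D>)"
proof -
  have "emeasure lborel (fst ` E) / 2 = ennreal (sigma E / 2)" if "E \<in> strips L"
    using that by (simp add: emeasure_fst_strips ennreal_divide_numeral sigma_strips_pos less_imp_le)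
  then show ?thesis by (auto simp: Nc_def)
qed

lemma Nc_subset: "Nc L \<D> \<subseteq> strips L"
  by (auto simp: Nc_def)

lemma Qc_subset: "Qc L A \<subseteq> strips L"
  by (auto simp: Qc_def)

lemma Cc_subset: "Cc L A \<subseteq> strips L"
  unfolding Cc_def using Mc_subset Nc_subset by blast

lemma disjoint_Cc: "disjoint (Cc L A)"
  unfolding Cc_def by (rule disjoint_Mc[OF Nc_subset])

lemma subset_Nc: "\<D> \<subseteq> strips L \<Longrightarrow> \<D> \<subseteq> Nc L \<D>"
proof
  fix E assume "\<D> \<subseteq> strips L" "E \<in> \<D>"
  then have "E \<in> strips L" "fst ` E \<inter> fst ` \<Union>\<D> = fst ` E" by blast+
  moreover have "0 \<le> sigma E" using sigma_strips_pos[OF \<open>E \<in> strips L\<close>] by simp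
  ultimately show "E \<in> Nc L \<D>" by (simp add: mem_Nc_iff emeasure_fst_strips)
qed

lemma Nc_mono:
  assumes "\<D> \<subseteq> \<D>'" "\<D>' \<subseteq> strips L"
  shows "Nc L \<D> \<subseteq> Nc L \<D>'"
proof
  fix E assume E: "E \<in> Nc L \<D>"
  then have "E \<in> strips L" by (simp add: mem_Nc_iff)
  have "fst ` E \<inter> fst ` \<Union>\<D>' \<in> sets lborel"
    using fst_strips_sets[OF \<open>E \<in> strips L\<close>] fst_Union_strips_sets[OF assms(2)] by (rule sets.Int)
  then have "emeasure lborel (fst ` E \<inter> fst ` \<Union>\<D>) \<le> emeasure lborel (fst ` E \<inter> fst ` \<Union>\<D>')"
    by (rule emeasure_mono[rotated]) (use assms(1) in blast)
  then show "E \<in> Nc L \<D>'" using E by (auto simp: mem_Nc_iff)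
qed

lemma Union_Cc: "\<Union>(Cc L A) = \<Union>(Nc L (Qc L A))"
  unfolding Cc_def by (rule Union_Mc[OF Nc_subset])

lemma Union_Cc_mono: "A \<subseteq> A' \<Longrightarrow> \<Union>(Cc L A) \<subseteq> \<Union>(Cc L A')"
proof -
  assume "A \<subseteq> A'"
  then have "Qc L A \<subseteq> Qc L A'" by (auto simp: Qc_def)
  then show ?thesis unfolding Union_Cc by (intro Union_mono Nc_mono[OF _ Qc_subset])
qed

lemma subset_Union_Cc:
  assumes "A \<subseteq> YL L"
  shows "A \<subseteq> \<Union>(Cc L A)"
proof
  fix p assume "p \<in> A"
  then obtain E where "E \<in> strips L" "p \<in> upper E" using ex_strip_upper assms by blast
  then have "E \<in> Qc L A" "p \<in> E" using \<open>p \<in> A\<close> by (auto simp: Qc_def upper_def)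
  then have "E \<in> Nc L (Qc L A)" "p \<in> E" using subset_Nc[OF Qc_subset] by blast+
  then show "p \<in> \<Union>(Cc L A)" unfolding Union_Cc by (rule UnionI)
qed

lemma emeasure_fst_Union_strips_le:
  assumes "\<S> \<subseteq> strips L"
  shows "emeasure lborel (fst ` \<Union>\<S>) \<le> (\<Sum>\<^sub>\<infinity>E\<in>\<S>. ennreal (sigma E))"
proof -
  have "fst ` \<Union>\<S> = \<Union>((`) fst ` \<S>)" by blast
  also have "emeasure lborel \<dots> \<le> infsum (emeasure lborel) ((`) fst ` \<S>)"
    using countable_subset[OF assms countable_strips] assms fst_strips_sets
    by (intro emeasure_Union_le_infsum) auto
  also have "\<dots> \<le> (\<Sum>\<^sub>\<infinity>E\<in>\<S>. emeasure lborel (fst ` E))"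
    by (rule infsum_image_le_ennreal)
  also have "\<dots> = (\<Sum>\<^sub>\<infinity>E\<in>\<S>. ennreal (sigma E))"
    using assms by (intro infsum_cong) (auto simp: emeasure_fst_strips)
  finally show ?thesis .
qed

lemma emeasure_fst_Union_Qc_le_mu: "emeasure lborel (fst ` \<Union>(Qc L A)) \<le> mu L A"
  unfolding mu_def outer_def
proof (rule INF_greatest, clarify)
  fix \<S> assume \<S>: "\<S> \<subseteq> strips L" "A \<subseteq> \<Union>\<S>"
  have "\<Union>(Qc L A) \<subseteq> \<Union>\<S>"
  proof
    fix p assume "p \<in> \<Union>(Qc L A)"
    then obtain E q where E: "E \<in> strips L" "p \<in> E" "q \<in> upper E" "q \<in> A"
      by (auto simp: Qc_def)
    then obtain E' where "E' \<in> \<S>" "q \<in> E'" using \<S> by blast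
    then have "E \<subseteq> E'" using strips_subset_if_upper[OF E(1) _ E(3)] \<S>(1) by blast
    then show "p \<in> \<Union>\<S>" using \<open>E' \<in> \<S>\<close> E(2) by blast
  qed
  then have "fst ` \<Union>(Qc L A) \<subseteq> fst ` \<Union>\<S>" by (rule image_mono)
  then have "emeasure lborel (fst ` \<Union>(Qc L A)) \<le> emeasure lborel (fst ` \<Union>\<S>)"
    using fst_Union_strips_sets[OF \<S>(1)] by (rule emeasure_mono)
  also have "\<dots> \<le> (\<Sum>\<^sub>\<infinity>E\<in>\<S>. ennreal (sigma E))"
    by (rule emeasure_fst_Union_strips_le[OF \<S>(1)])
  finally show "emeasure lborel (fst ` \<Union>(Qc L A)) \<le> (\<Sum>\<^sub>\<infinity>E\<in>\<S>. ennreal (sigma E))" .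
qed

lemma mu_Union_Cc_le: "mu L (\<Union>(Cc L A)) \<le> 2 * mu L A"
proof -
  define P where "P = fst ` \<Union>(Qc L A)"
  have P: "P \<in> sets lborel" unfolding P_def by (rule fst_Union_strips_sets[OF Qc_subset])
  have "mu L (\<Union>(Cc L A)) \<le> (\<Sum>\<^sub>\<infinity>E\<in>Cc L A. ennreal (sigma E))"
    unfolding mu_def by (rule outer_le_infsum[OF Cc_subset]) simp
  also have "\<dots> \<le> (\<Sum>\<^sub>\<infinity>E\<in>Cc L A. 2 * emeasure lborel (fst ` E \<inter> P))"
  proof (rule infsum_mono)
    fix E assume "E \<in> Cc L A"
    then have "E \<in> Nc L (Qc L A)" using Mc_subset unfolding Cc_def by blast
    then have "E \<in> strips L" "ennreal (sigma E / 2) \<le> emeasure lborel (fst ` E \<inter> P)"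
      by (simp_all add: mem_Nc_iff P_def)
    moreover have "ennreal (sigma E) = 2 * ennreal (sigma E / 2)"
      using sigma_strips_pos[OF \<open>E \<in> strips L\<close>] ennreal_mult[of 2 "sigma E / 2"] by simp
    ultimately show "ennreal (sigma E) \<le> 2 * emeasure lborel (fst ` E \<inter> P)"
      by (simp add: mult_left_mono)
  qed simp_all
  also have "\<dots> \<le> 2 * (\<Sum>\<^sub>\<infinity>E\<in>Cc L A. emeasure lborel (fst ` E \<inter> P))"
    by (rule infsum_cmult_right_le_ennreal)
  also have "(\<Sum>\<^sub>\<infinity>E\<in>Cc L A. emeasure lborel (fst ` E \<inter> P)) \<le> emeasure lborel P"
  proof (rule infsum_emeasure_disjoint_le[OF _ _ _ P])
    show "disjoint_family_on (\<lambda>E. fst ` E \<inter> P) (Cc L A)"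
      unfolding disjoint_family_on_def
    proof (intro ballI impI)
      fix E E' assume E: "E \<in> Cc L A" "E' \<in> Cc L A" "E \<noteq> E'"
      then have "E \<inter> E' = {}" using disjoint_Cc[of L A] by (simp add: pairwise_def disjnt_def)
      then have "fst ` E \<inter> fst ` E' = {}"
        using strips_disjoint_iff_fst E(1,2) Cc_subset by blast
      then show "(fst ` E \<inter> P) \<inter> (fst ` E' \<inter> P) = {}" by blast
    qed
    show "fst ` E \<inter> P \<in> sets lborel" if "E \<in> Cc L A" for E
      using that Cc_subset by (intro sets.Int[OF fst_strips_sets P]) blast
  qed auto
  also have "emeasure lborel P \<le> mu L A"
    unfolding P_def by (rule emeasure_fst_Union_Qc_le_mu)
  finally show ?thesis by (simp add: mult_left_mono)
qed

lemma mem_Nc_imp_meets: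
  assumes "\<D> \<subseteq> strips L" "E \<in> Nc L \<D>"
  shows "\<exists>G\<in>\<D>. E \<inter> G \<noteq> {}"
proof -
  have "E \<in> strips L" "ennreal (sigma E / 2) \<le> emeasure lborel (fst ` E \<inter> fst ` \<Union>\<D>)"
    using assms(2) by (simp_all add: mem_Nc_iff)
  moreover have "0 < ennreal (sigma E / 2)"
    using sigma_strips_pos[OF \<open>E \<in> strips L\<close>] by simp
  ultimately have "fst ` E \<inter> fst ` \<Union>\<D> \<noteq> {}" by auto
  then obtain G where "G \<in> \<D>" "fst ` E \<inter> fst ` G \<noteq> {}" by blast
  moreover have "G \<in> strips L" using \<open>G \<in> \<D>\<close> assms(1) by blast
  ultimately show ?thesis using strips_disjoint_iff_fst[OF \<open>E \<in> strips L\<close>] by blast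
qed

lemma Cc_disjoint_if_disjoint_Mc:
  assumes "\<A> \<subseteq> strips L" "F \<inter> \<Union>(Mc \<A>) = {}"
  shows "Cc L F \<inter> \<A> = {}"
proof (rule ccontr)
  assume "Cc L F \<inter> \<A> \<noteq> {}"
  then obtain E where E: "E \<in> Mc (Nc L (Qc L F))" "E \<in> \<A>" by (auto simp: Cc_def)
  then have "E \<subseteq> \<Union>(Mc \<A>)" using Union_Mc[OF assms(1)] by blast
  then have "E \<inter> F = {}" using assms(2) by blast
  have "E \<in> Nc L (Qc L F)" using E(1) Mc_subset by blast
  then obtain G where G: "G \<in> Qc L F" "E \<inter> G \<noteq> {}" using mem_Nc_imp_meets[OF Qc_subset] by blast
  have "G \<subseteq> E"
  proof -
    have "E \<in> strips L" "G \<in> strips L" using E(2) assms(1) G(1) Qc_subset by blast+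
    then have "E \<subseteq> G \<or> G \<subseteq> E" using strips_nested_or_disjoint G(2) by blast
    moreover have "G \<in> Nc L (Qc L F)" using G(1) subset_Nc[OF Qc_subset] by blast
    ultimately show ?thesis using E(1) by (auto simp: Mc_def)
  qed
  moreover obtain p where "p \<in> upper G" "p \<in> F" using G(1) by (auto simp: Qc_def)
  ultimately show False using \<open>E \<inter> F = {}\<close> by (auto simp: upper_def)
qed

section \<open>Trees and the Caratheodory property\<close>

lemma Nidx_spec:
  assumes "l' \<le> l"
  shows "dyad n (- l) \<subseteq> dyad (Nidx n l l') (- l')"
proof -
  define x where "x = (2::real) powi (- l) * (of_int n + 1)"
  have x: "x \<in> dyad n (- l)" unfolding x_def by (rule right_endpoint_in_dyad)
  have unique: "k = k'" if "dyad n (- l) \<subseteq> dyad k (- l')" "dyad n (- l) \<subseteq> dyad k' (- l')" for k k'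
    using that x dyad_index_unique by blast
  have k: "dyad n (- l) \<subseteq> dyad (\<lceil>x / 2 powi (- l')\<rceil> - 1) (- l')"
    using assms x by (intro dyad_nested[of "- l" "- l'" x]) (simp_all add: mem_dyad_iff_ceiling)
  show ?thesis
    unfolding Nidx_def by (rule theI[where P = "\<lambda>k. dyad n (- l) \<subseteq> dyad k (- l')", OF k]) (rule unique[OF _ k])
qed

lemma Nidx_eq: "l' \<le> l \<Longrightarrow> dyad n (- l) \<subseteq> dyad k (- l') \<Longrightarrow> Nidx n l l' = k"
  using Nidx_spec right_endpoint_in_dyad dyad_index_unique by blast

lemma Nidx_Nidx:
  assumes "l' \<le> b" "b \<le> l"
  shows "Nidx (Nidx n l b) b l' = Nidx n l l'"
proof -
  have "dyad n (- l) \<subseteq> dyad (Nidx n l b) (- b)" using assms(2) by (rule Nidx_spec)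
  also have "\<dots> \<subseteq> dyad (Nidx (Nidx n l b) b l') (- l')" using assms(1) by (rule Nidx_spec)
  finally show ?thesis using assms by (intro Nidx_eq[symmetric]) auto
qed

lemma mem_tile_iff:
  "(x, s, y) \<in> tile m l k \<longleftrightarrow> x \<in> dyad m l \<and> 2 powi (l - 1) < s \<and> s \<le> 2 powi l \<and> y \<in> dyad k (- l)"
  by (simp add: tile_def)

lemma mem_tree_iff:
  "p \<in> tree m l n \<longleftrightarrow> (\<exists>l' m'. l' \<le> l \<and> dyad m' l' \<subseteq> dyad m l \<and> p \<in> tile m' l' (Nidx n l l'))"
  unfolding tree_def by blast

lemma tree_subset_strip: "tree m l n \<subseteq> strip m l"
proof
  fix p assume "p \<in> tree m l n"
  then obtain l' m' where "l' \<le> l" "dyad m' l' \<subseteq> dyad m l" "p \<in> tile m' l' (Nidx n l l')"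
    unfolding mem_tree_iff by blast
  moreover obtain x s y where p_eq: "p = (x, s, y)" by (cases p)
  ultimately have "x \<in> dyad m l" "2 powi (l' - 1) < s" "s \<le> 2 powi l'"
    by (auto simp: mem_tile_iff)
  moreover have "(0::real) < 2 powi (l' - 1)" "(2::real) powi l' \<le> 2 powi l"
    using \<open>l' \<le> l\<close> by simp_all
  ultimately have "0 < s" "s \<le> 2 powi l" by linarith+
  with \<open>x \<in> dyad m l\<close> show "p \<in> strip m l" by (simp add: p_eq mem_strip_iff)
qed

lemma fst_tree [simp]: "fst ` tree m l n = dyad m l"
proof
  show "fst ` tree m l n \<subseteq> dyad m l" using tree_subset_strip fst_strip by blast
  show "dyad m l \<subseteq> fst ` tree m l n"
  proof
    fix x assume "x \<in> dyad m l"
    define y where "y = (2::real) powi (- l) * (of_int (Nidx n l l) + 1)"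
    have "(x, 2 powi l, y) \<in> tile m l (Nidx n l l)"
      using \<open>x \<in> dyad m l\<close> by (simp add: mem_tile_iff y_def right_endpoint_in_dyad powi_two_diff_one)
    then have "(x, 2 powi l, y) \<in> tree m l n" unfolding mem_tree_iff by blast
    then show "x \<in> fst ` tree m l n" by force
  qed
qed

lemma tree_eq_imp_level_eq: "tree m l n = tree m' l' n' \<Longrightarrow> l = l'"
  by (metis dyad_eq_imp_level_eq fst_tree)

lemma tau_tree [simp]: "tau (tree m l n) = 2 powi l"
  unfolding tau_def by (rule the_equality) (auto dest: tree_eq_imp_level_eq)

lemma treesE:
  assumes "T \<in> trees L"
  obtains m l n where "T = tree m l n" "l \<le> L"
  using assms by (auto simp: trees_def)

lemma tree_in_trees_iff [simp]: "tree m l n \<in> trees L \<longleftrightarrow> l \<le> L"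
  by (auto simp: trees_def dest: tree_eq_imp_level_eq)

lemma emeasure_fst_trees: "T \<in> trees L \<Longrightarrow> emeasure lborel (fst ` T) = tau T"
  by (auto elim: treesE simp: emeasure_dyad)

lemma fst_trees_sets: "T \<in> trees L \<Longrightarrow> fst ` T \<in> sets lborel"
  by (metis treesE fst_tree dyad_sets)

lemma tree_Int_strip_subset_tree:
  assumes "b < l" "dyad a b \<subseteq> dyad m l"
  shows "tree m l n \<inter> strip a b \<subseteq> tree a b (Nidx n l b)"
proof
  fix p assume p: "p \<in> tree m l n \<inter> strip a b"
  then have "p \<in> tree m l n" by (rule IntD1)
  then obtain l' m' where "l' \<le> l" "dyad m' l' \<subseteq> dyad m l" and tile: "p \<in> tile m' l' (Nidx n l l')"
    unfolding mem_tree_iff by blast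
  obtain x s y where p_eq: "p = (x, s, y)" by (cases p)
  have "2 powi (l' - 1) < s" "x \<in> dyad m' l'" using tile by (simp_all add: p_eq mem_tile_iff)
  moreover have "s \<le> 2 powi b" "x \<in> dyad a b" using p by (simp_all add: p_eq mem_strip_iff)
  ultimately have "(2::real) powi (l' - 1) < 2 powi b" by linarith
  then have "l' \<le> b" by simp
  then have "dyad m' l' \<subseteq> dyad a b" using dyad_nested \<open>x \<in> dyad m' l'\<close> \<open>x \<in> dyad a b\<close> by blast
  moreover have "p \<in> tile m' l' (Nidx (Nidx n l b) b l')"
    using tile \<open>l' \<le> b\<close> assms(1) by (simp add: Nidx_Nidx)
  ultimately show "p \<in> tree a b (Nidx n l b)"
    unfolding mem_tree_iff using \<open>l' \<le> b\<close> by blast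
qed

lemma tree_Int_strip_cover:
  assumes "T \<in> trees L" "A \<in> strips L" "T \<inter> A \<noteq> {}"
  obtains T' where "T' \<in> trees L" "T \<inter> A \<subseteq> T'" "ennreal (tau T') \<le> emeasure lborel (fst ` T \<inter> fst ` A)"
proof -
  obtain m l n where T: "T = tree m l n" "l \<le> L" using assms(1) by (rule treesE)
  obtain a b where A: "A = strip a b" "b \<le> L" using assms(2) by (rule stripsE)
  obtain p where "p \<in> strip m l" "p \<in> strip a b" using assms(3) tree_subset_strip T A by blast
  show ?thesis
  proof (cases "b < l")
    case True
    then have "dyad a b \<subseteq> dyad m l"
      using strip_subset_of_mem[OF \<open>p \<in> strip a b\<close> \<open>p \<in> strip m l\<close>] by (simp add: strip_subset_iff)
    then have "T \<inter> A \<subseteq> tree a b (Nidx n l b)" "fst ` T \<inter> fst ` A = dyad a b"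
      using tree_Int_strip_subset_tree[OF True] by (simp_all add: T A Int_absorb1)
    then show ?thesis using A(2) by (intro that[of "tree a b (Nidx n l b)"]) (simp_all add: emeasure_dyad)
  next
    case False
    then have "dyad m l \<subseteq> dyad a b"
      using strip_subset_of_mem[OF \<open>p \<in> strip m l\<close> \<open>p \<in> strip a b\<close>] by (simp add: strip_subset_iff)
    then have "fst ` T \<inter> fst ` A = dyad m l" by (simp add: T A Int_absorb2)
    then show ?thesis using assms(1) by (intro that[of T]) (simp_all add: T emeasure_dyad)
  qed
qed

lemma nu_Int_strip_le:
  assumes "A \<in> strips L" "\<T> \<subseteq> trees L" "U \<inter> A \<subseteq> \<Union>\<T>"
  shows "nu L (U \<inter> A) \<le> (\<Sum>\<^sub>\<infinity>T\<in>\<T>. emeasure lborel (fst ` T \<inter> fst ` A))"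
proof -
  define I where "I = {T \<in> \<T>. T \<inter> A \<noteq> {}}"
  have "\<exists>T'. T' \<in> trees L \<and> T \<inter> A \<subseteq> T' \<and> ennreal (tau T') \<le> emeasure lborel (fst ` T \<inter> fst ` A)"
    if "T \<in> I" for T
  proof -
    have "T \<in> trees L" "T \<inter> A \<noteq> {}" using that assms(2) by (auto simp: I_def)
    then show ?thesis using assms(1) by (metis tree_Int_strip_cover)
  qed
  then obtain t where t: "\<And>T. T \<in> I \<Longrightarrow> t T \<in> trees L \<and> T \<inter> A \<subseteq> t T \<and>
      ennreal (tau (t T)) \<le> emeasure lborel (fst ` T \<inter> fst ` A)"
    by metis
  have "t ` I \<subseteq> trees L" using t by blast
  moreover have "U \<inter> A \<subseteq> \<Union>(t ` I)"
  proof
    fix p assume "p \<in> U \<inter> A"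
    then obtain T where "T \<in> \<T>" "p \<in> T" using assms(3) by blast
    then have "T \<in> I" "p \<in> T \<inter> A" using \<open>p \<in> U \<inter> A\<close> by (auto simp: I_def)
    then have "p \<in> t T" using t by blast
    with \<open>T \<in> I\<close> show "p \<in> \<Union>(t ` I)" by blast
  qed
  ultimately have "nu L (U \<inter> A) \<le> (\<Sum>\<^sub>\<infinity>T\<in>I. ennreal (tau (t T)))"
    unfolding nu_def by (rule outer_le_infsum_image)
  also have "\<dots> \<le> (\<Sum>\<^sub>\<infinity>T\<in>I. emeasure lborel (fst ` T \<inter> fst ` A))"
    using t by (intro infsum_mono) simp_all
  also have "\<dots> \<le> (\<Sum>\<^sub>\<infinity>T\<in>\<T>. emeasure lborel (fst ` T \<inter> fst ` A))"
    by (intro infsum_mono_neutral) (auto simp: I_def)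
  finally show ?thesis .
qed

lemma infsum_emeasure_fst_Int_le_tau:
  assumes "\<D> \<subseteq> strips L" "disjoint \<D>" "T \<in> trees L"
  shows "(\<Sum>\<^sub>\<infinity>A\<in>\<D>. emeasure lborel (fst ` T \<inter> fst ` A)) \<le> tau T"
proof -
  have "(\<Sum>\<^sub>\<infinity>A\<in>\<D>. emeasure lborel (fst ` T \<inter> fst ` A)) \<le> emeasure lborel (fst ` T)"
  proof (rule infsum_emeasure_disjoint_le[OF _ _ _ fst_trees_sets[OF assms(3)]])
    show "disjoint_family_on (\<lambda>A. fst ` T \<inter> fst ` A) \<D>"
      unfolding disjoint_family_on_def
    proof (intro ballI impI)
      fix A A' assume A: "A \<in> \<D>" "A' \<in> \<D>" "A \<noteq> A'"
      then have "A \<inter> A' = {}" using assms(2) by (simp add: pairwise_def disjnt_def)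
      then have "fst ` A \<inter> fst ` A' = {}" using strips_disjoint_iff_fst A(1,2) assms(1) by blast
      then show "(fst ` T \<inter> fst ` A) \<inter> (fst ` T \<inter> fst ` A') = {}" by blast
    qed
    show "fst ` T \<inter> fst ` A \<in> sets lborel" if "A \<in> \<D>" for A
      using that assms(1) by (intro sets.Int[OF fst_trees_sets[OF assms(3)] fst_strips_sets]) blast
  qed auto
  then show ?thesis using emeasure_fst_trees[OF assms(3)] by simp
qed

lemma infsum_nu_Int_le_nu_Union:
  assumes "\<D> \<subseteq> strips L" "disjoint \<D>"
  shows "(\<Sum>\<^sub>\<infinity>A\<in>\<D>. nu L (U \<inter> A)) \<le> nu L (U \<inter> \<Union>\<D>)"
proof -
  have "(\<Sum>\<^sub>\<infinity>A\<in>\<D>. nu L (U \<inter> A)) \<le> (\<Sum>\<^sub>\<infinity>T\<in>\<T>. ennreal (tau T))"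
    if \<T>: "\<T> \<subseteq> trees L" "U \<inter> \<Union>\<D> \<subseteq> \<Union>\<T>" for \<T>
  proof -
    have "(\<Sum>\<^sub>\<infinity>A\<in>\<D>. nu L (U \<inter> A)) \<le> (\<Sum>\<^sub>\<infinity>A\<in>\<D>. \<Sum>\<^sub>\<infinity>T\<in>\<T>. emeasure lborel (fst ` T \<inter> fst ` A))"
      using assms(1) \<T> by (intro infsum_mono nu_Int_strip_le) auto
    also have "\<dots> \<le> (\<Sum>\<^sub>\<infinity>T\<in>\<T>. \<Sum>\<^sub>\<infinity>A\<in>\<D>. emeasure lborel (fst ` T \<inter> fst ` A))"
      by (rule infsum_swap_le_ennreal)
    also have "\<dots> \<le> (\<Sum>\<^sub>\<infinity>T\<in>\<T>. ennreal (tau T))"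
      using assms \<T>(1) by (intro infsum_mono infsum_emeasure_fst_Int_le_tau) auto
    finally show ?thesis .
  qed
  then show ?thesis unfolding nu_def[of L] outer_def[of "trees L"] by (auto intro: INF_greatest)
qed

lemma caratheodory_strips:
  assumes "\<D> \<subseteq> strips L" "disjoint \<D>" "K \<ge> 1"
  shows "caratheodory (nu L) K \<D>"
  unfolding caratheodory_def
proof (intro conjI allI)
  fix U
  have "nu L (U \<inter> \<Union>\<D>) \<le> ennreal K * nu L (U \<inter> \<Union>\<D>)"
    using mult_right_mono[of 1 "ennreal K" "nu L (U \<inter> \<Union>\<D>)"] assms(3) by simp
  with infsum_nu_Int_le_nu_Union[OF assms(1,2)]
  show "(\<Sum>\<^sub>\<infinity>A\<in>\<D>. nu L (U \<inter> A)) \<le> ennreal K * nu L (U \<inter> \<Union>\<D>)"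
    by (rule order_trans)
qed (rule assms(2))

section \<open>The crop condition\<close>

lemma covering_function_Cc:
  assumes "\<Phi> \<ge> 2"
  shows "covering_function (YL L) (strips L) (mu L) (Cc L) \<Phi>"
proof -
  have "(2::ennreal) \<le> ennreal \<Phi>" using assms ennreal_leI[of 2 \<Phi>] by simp
  then have "2 * mu L A \<le> ennreal \<Phi> * mu L A" for A by (rule mult_right_mono) simp
  then have "mu L (\<Union>(Cc L A)) \<le> ennreal \<Phi> * mu L A" for A
    using mu_Union_Cc_le order_trans by blast
  then show ?thesis
    unfolding covering_function_def using Cc_subset disjoint_Cc subset_Union_Cc Union_Cc_mono by simp
qed

theorem lemma4p7:
  fixes L :: int and \<Phi> K :: real
  assumes "\<Phi> \<ge> 2" and "K \<ge> 1"
  shows "crop_condition (YL L) (strips L) (mu L) (nu L) (Cc L) \<Phi> K"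
  unfolding crop_condition_def
proof (intro conjI allI impI)
  show "covering_function (YL L) (strips L) (mu L) (Cc L) \<Phi>"
    using assms(1) by (rule covering_function_Cc)
  fix \<A> assume "\<A> \<subseteq> strips L"
  show "\<exists>\<D>'\<subseteq>\<A>. caratheodory (nu L) K \<D>' \<and>
          (\<forall>F. F \<subseteq> YL L \<and> F \<inter> \<Union>\<D>' = {} \<longrightarrow> \<Union>(Cc L F) = \<Union>(Cc L F - \<A>))"
  proof (intro exI[of _ "Mc \<A>"] conjI allI impI)
    show "Mc \<A> \<subseteq> \<A>" by (rule Mc_subset)
    have "Mc \<A> \<subseteq> strips L" using Mc_subset \<open>\<A> \<subseteq> strips L\<close> by blast
    then show "caratheodory (nu L) K (Mc \<A>)"
      using disjoint_Mc[OF \<open>\<A> \<subseteq> strips L\<close>] assms(2) by (rule caratheodory_strips)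
    fix F assume "F \<subseteq> YL L \<and> F \<inter> \<Union>(Mc \<A>) = {}"
    then have "Cc L F \<inter> \<A> = {}" using Cc_disjoint_if_disjoint_Mc[OF \<open>\<A> \<subseteq> strips L\<close>] by blast
    then show "\<Union>(Cc L F) = \<Union>(Cc L F - \<A>)" by (simp add: Diff_triv)
  qed
qed

end
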